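(* Let $q\ge2$ and let $W$ be a $q$-ary symmetric channel on an alphabet $\mathcal{X}=\mathcal{Y}$ with $|\mathcal{X}|=q$, i.e., $W(y|x)=v$ if $y=x$ and $W(y|x)=u$ if $y\ne x$, where $u,v\in[0,1]$ and $v=1-(q-1)u$. Then $$\eta_\infty(W):=\sup_{P_0,P_1\in\Delta(\mathcal{X})}\frac{D_\infty(Q_0\|Q_1)}{D_\infty(P_0\|P_1)}=\frac{|v-u|}{\max\{u,v\}},$$ where $Q_i(y)=\sum_xP_i(x)W(y|x)$. Furthermore, this supremum is achieved in the limit by degenerate distributions (binary input pairs that both converge to the same point mass).
   Context: $\Delta(\mathcal{X})$ is the probability simplex on $\mathcal{X}$; $D_\infty(P\|Q)=\log\max_x\frac{P(x)}{Q(x)}$ is the Rényi divergence of order infinity. *)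

theory Defs
  imports "HOL-Analysis.Analysis"
begin

definition prob_simplex :: "('a::finite \<Rightarrow> real) set" where
  "prob_simplex = {P. (\<forall>x. 0 \<le> P x) \<and> (\<Sum>x\<in>UNIV. P x) = 1}"

text \<open>Renyi divergence of order infinity, D(P||Q) = log max_x P(x)/Q(x),
  meaningful (finite) when the support of P is contained in that of Q.
  Natural logarithm (the ratio of divergences does not depend on the base).\<close>
definition Dinf :: "('a::finite \<Rightarrow> real) \<Rightarrow> ('a \<Rightarrow> real) \<Rightarrow> real" where
  "Dinf P Q = ln (Max ((\<lambda>x. P x / Q x) ` UNIV))"

definition qsc :: "real \<Rightarrow> real \<Rightarrow> 'a \<Rightarrow> 'a \<Rightarrow> real" where
  "qsc u v x y = (if y = x then v else u)"

definition out_dist :: "('a::finite \<Rightarrow> 'a \<Rightarrow> real) \<Rightarrow> ('a \<Rightarrow> real) \<Rightarrow> 'a \<Rightarrow> real" where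
  "out_dist W P y = (\<Sum>x\<in>UNIV. P x * W x y)"

text \<open>Admissible input pairs: distributions with 0 < D(P0||P1) < infinity,
  i.e. P0 \<noteq> P1 and supp P0 \<subseteq> supp P1.\<close>
definition admissible_pairs :: "(('a::finite \<Rightarrow> real) \<times> ('a \<Rightarrow> real)) set" where
  "admissible_pairs = {(P0, P1). P0 \<in> prob_simplex \<and> P1 \<in> prob_simplex \<and> P0 \<noteq> P1 \<and>
      (\<forall>x. P1 x = 0 \<longrightarrow> P0 x = 0)}"

definition contraction_ratio ::
  "('a::finite \<Rightarrow> 'a \<Rightarrow> real) \<Rightarrow> ('a \<Rightarrow> real) \<Rightarrow> ('a \<Rightarrow> real) \<Rightarrow> real" where
  "contraction_ratio W P0 P1 = Dinf (out_dist W P0) (out_dist W P1) / Dinf P0 P1"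

definition eta_inf :: "('a::finite \<Rightarrow> 'a \<Rightarrow> real) \<Rightarrow> real" where
  "eta_inf W = (SUP PP \<in> admissible_pairs. contraction_ratio W (fst PP) (snd PP))"

end

(*
  Let M = max_x P0 x / P1 x = exp D(P0||P1), so that P0 <= M P1 and, summing over the other
  letters, 1 - P0 <= M (1 - P1) pointwise. The output of the channel is Q(y) = u + (v - u) P(y),
  an affine function of P(y) (if u <= v) or of 1 - P(y) (if u > v) with values between
  n = min u v and m = max u v. Maximising a ratio of such affine functions under these
  constraints gives Q0/Q1 <= m M / (n M + m - n), and by the weighted AM-GM inequality this is
  at most M powr c with c = |v - u| / max u v; hence D(Q0||Q1) <= c D(P0||P1).

  Conversely, for P0 the point mass at x0 and P1 = (1 - h) P0 + h (point mass at x1) one has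
  D(P0||P1) = -ln (1 - h) <= h / (1 - h) and D(Q0||Q1) >= -ln (1 - c h) >= c h, so the
  contraction ratio lies between c (1 - h) and c and tends to c as h -> 0.
*)
theory Submission
  imports Defs "HOL-Real_Asymp.Real_Asymp"
begin

definition max_ratio :: "('a::finite \<Rightarrow> real) \<Rightarrow> ('a \<Rightarrow> real) \<Rightarrow> real" where
  "max_ratio P Q = Max ((\<lambda>x. P x / Q x) ` UNIV)"

lemma Dinf_eq_ln_max_ratio: "Dinf P Q = ln (max_ratio P Q)"
  by (simp add: Dinf_def max_ratio_def)

lemma ratio_le_max_ratio: "P x / Q x \<le> max_ratio P Q"
  unfolding max_ratio_def by (rule Max_ge) auto

lemma le_max_ratio_mult:
  assumes "0 \<le> Q x" and "Q x = 0 \<Longrightarrow> P x = 0"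
  shows "P x \<le> max_ratio P Q * Q x"
proof (cases "Q x = 0")
  case False
  then show ?thesis
    using ratio_le_max_ratio[of P x Q] assms(1) by (simp add: divide_le_eq mult.commute)
qed (use assms(2) in simp)

lemma prob_simplex_nonneg: "P \<in> prob_simplex \<Longrightarrow> 0 \<le> P x"
  by (simp add: prob_simplex_def)

lemma prob_simplex_sum: "P \<in> prob_simplex \<Longrightarrow> sum P UNIV = 1"
  by (simp add: prob_simplex_def)

lemma prob_simplex_le_one: "P \<in> prob_simplex \<Longrightarrow> P x \<le> 1"
  by (metis prob_simplex_sum prob_simplex_nonneg finite UNIV_I member_le_sum)

lemma prob_simplex_exists_pos: "P \<in> prob_simplex \<Longrightarrow> \<exists>x. 0 < P x"
  by (metis prob_simplex_sum prob_simplex_nonneg antisym_conv1 sum.neutral zero_neq_one)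

lemma prob_simplex_exists_less:
  assumes "P \<in> prob_simplex" "Q \<in> prob_simplex" "P \<noteq> Q"
  shows "\<exists>x. Q x < P x"
proof (rule ccontr)
  assume "\<nexists>x. Q x < P x"
  then have "\<forall>x\<in>UNIV. 0 \<le> Q x - P x" by (simp add: not_less)
  moreover have "(\<Sum>x\<in>UNIV. Q x - P x) = 0"
    using assms by (simp add: sum_subtractf prob_simplex_sum)
  ultimately have "\<forall>x. Q x - P x = 0" by (simp add: sum_nonneg_eq_0_iff)
  then show False using assms(3) by auto
qed

lemma one_less_max_ratio:
  assumes "P \<in> prob_simplex" "Q \<in> prob_simplex" "P \<noteq> Q" and "\<And>x. Q x = 0 \<Longrightarrow> P x = 0"
  shows "1 < max_ratio P Q"
proof -
  obtain x where less: "Q x < P x" using prob_simplex_exists_less assms(1-3) by blast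
  then have "Q x \<noteq> 0" using assms(4) by force
  then have "0 < Q x" using prob_simplex_nonneg[OF assms(2), of x] by simp
  then have "1 < P x / Q x" using less by simp
  then show ?thesis using ratio_le_max_ratio[of P x Q] by linarith
qed

lemma one_le_max_ratio:
  assumes "P \<in> prob_simplex" "Q \<in> prob_simplex" and "\<And>x. Q x = 0 \<Longrightarrow> P x = 0"
  shows "1 \<le> max_ratio P Q"
proof (cases "P = Q")
  case True
  obtain x where "0 < Q x" using prob_simplex_exists_pos assms(2) by blast
  then show ?thesis using ratio_le_max_ratio[of P x Q] True by simp
qed (use one_less_max_ratio assms in fastforce)

lemma one_minus_le_mult_one_minus:
  assumes "P \<in> prob_simplex" "Q \<in> prob_simplex" and "\<And>x. P x \<le> M * Q x"
  shows "1 - P y \<le> M * (1 - Q y)"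
proof -
  have "1 - P y = sum P (UNIV - {y})"
    using assms(1) by (simp add: prob_simplex_sum sum_diff1)
  also have "\<dots> \<le> (\<Sum>x\<in>UNIV - {y}. M * Q x)" by (intro sum_mono assms(3))
  also have "\<dots> = M * (1 - Q y)"
    using assms(2) by (simp add: prob_simplex_sum sum_diff1 flip: sum_distrib_left)
  finally show ?thesis .
qed

lemma out_dist_nonneg:
  assumes "\<And>x. 0 \<le> P x" and "\<And>x y. 0 \<le> W x y"
  shows "0 \<le> out_dist W P y"
  unfolding out_dist_def using assms by (simp add: sum_nonneg)

lemma sum_out_dist: "sum (out_dist W P) UNIV = (\<Sum>x\<in>UNIV. P x * (\<Sum>y\<in>UNIV. W x y))"
  unfolding out_dist_def sum_distrib_left by (rule sum.swap)

lemma out_dist_in_prob_simplex: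
  assumes "P \<in> prob_simplex" and "\<And>x y. 0 \<le> W x y" and "\<And>x. (\<Sum>y\<in>UNIV. W x y) = 1"
  shows "out_dist W P \<in> prob_simplex"
  using assms prob_simplex_nonneg[OF assms(1)]
  by (simp add: prob_simplex_def out_dist_nonneg sum_out_dist)

lemma out_dist_abs_cont:
  assumes "\<And>x. 0 \<le> Q x" and "\<And>x y. 0 \<le> W x y" and "\<And>x. Q x = 0 \<Longrightarrow> P x = 0"
    and "out_dist W Q y = 0"
  shows "out_dist W P y = 0"
proof -
  have "\<forall>x\<in>UNIV. Q x * W x y = 0"
    using assms(4) unfolding out_dist_def using assms(1,2) by (simp add: sum_nonneg_eq_0_iff)
  then have "\<forall>x\<in>UNIV. P x * W x y = 0" using assms(3) by (metis mult_eq_0_iff)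
  then show ?thesis unfolding out_dist_def by (rule sum.neutral)
qed

lemma qsc_nonneg: "0 \<le> u \<Longrightarrow> 0 \<le> v \<Longrightarrow> 0 \<le> qsc u v x y"
  by (simp add: qsc_def)

lemma sum_qsc: "(\<Sum>y\<in>UNIV. qsc u v x y) = v + (real CARD('a) - 1) * u"
  for x :: "'a::finite"
proof -
  have "(\<Sum>y\<in>UNIV. qsc u v x y) = qsc u v x x + (\<Sum>y\<in>UNIV - {x}. qsc u v x y)"
    by (simp add: sum.remove)
  also have "\<dots> = v + (real CARD('a) - 1) * u"
    by (simp add: qsc_def card_Diff_singleton of_nat_diff)
  finally show ?thesis .
qed

lemma out_dist_qsc:
  assumes "P \<in> prob_simplex"
  shows "out_dist (qsc u v) P y = u + (v - u) * P y"
proof -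
  have "out_dist (qsc u v) P y = (\<Sum>x\<in>UNIV. u * P x + (if x = y then (v - u) * P y else 0))"
    unfolding out_dist_def by (intro sum.cong) (auto simp: qsc_def algebra_simps)
  also have "\<dots> = u + (v - u) * P y"
    using assms by (simp add: sum.distrib prob_simplex_sum flip: sum_distrib_left)
  finally show ?thesis .
qed

(* The right-hand side is the value of the left-hand side at x = 1, y = 1 / M. *)
lemma affine_ratio_le:
  fixes m n M x y :: real
  assumes "0 \<le> n" "n \<le> m" "0 < m" "1 < M" "x \<le> 1" "0 \<le> y" "x \<le> M * y"
  shows "(n + (m - n) * x) / (n + (m - n) * y) \<le> m * M / (n * M + m - n)"
proof -
  have den: "0 < n * M + m - n"
    using assms mult_left_mono[of 1 M n] by linarith
  have den': "0 \<le> n + (m - n) * y"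
    using assms by (intro add_nonneg_nonneg mult_nonneg_nonneg) auto
  have key: "(n + (m - n) * x) * (n * M + m - n) \<le> m * M * (n + (m - n) * y)"
  proof (cases "1 \<le> M * y")
    case True
    have "n + (m - n) * x \<le> m"
      using assms by (smt (verit) mult_left_le)
    then have "(n + (m - n) * x) * (n * M + m - n) \<le> m * (n * M + m - n)"
      using den by (intro mult_right_mono) auto
    also have "\<dots> \<le> m * M * (n + (m - n) * y)"
    proof -
      have "m * (m - n) * 1 \<le> m * (m - n) * (M * y)"
        using True assms by (intro mult_left_mono) auto
      then show ?thesis by (simp add: algebra_simps)
    qed
    finally show ?thesis .
  next
    case False
    have "n + (m - n) * x \<le> n + (m - n) * (M * y)"
      using assms by (simp add: mult_left_mono)
    then have "(n + (m - n) * x) * (n * M + m - n) \<le> (n + (m - n) * (M * y)) * (n * M + m - n)"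
      using den by (intro mult_right_mono) auto
    also have "\<dots> \<le> m * M * (n + (m - n) * y)"
    proof -
      have "0 \<le> n * (m - n) * (M - 1) * (1 - M * y)" using assms False by simp
      then show ?thesis by (simp add: algebra_simps)
    qed
    finally show ?thesis .
  qed
  show ?thesis
  proof (cases "n + (m - n) * y = 0")
    case True
    then show ?thesis using den assms by simp
  next
    case False
    then show ?thesis using key den den' by (simp add: divide_simps mult.commute)
  qed
qed

lemma affine_bound_le_powr:
  fixes m n M :: real
  assumes "0 \<le> n" "n \<le> m" "0 < m" "1 < M"
  shows "m * M / (n * M + m - n) \<le> M powr ((m - n) / m)"
proof -
  define t where "t = n / m"
  have t: "0 \<le> t" "t \<le> 1" using assms by (auto simp: t_def)
  have "M powr t * 1 powr (1 - t) \<le> t * M + (1 - t) * 1"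
    using t assms by (intro Youngs_inequality_0) auto
  then have young: "M powr t \<le> t * M + (1 - t)" by simp
  have pos: "0 < M powr t" using assms by simp
  with young have pos': "0 < t * M + (1 - t)" by linarith
  have "t * M + (1 - t) = (n * M + m - n) / m"
    using assms by (simp add: t_def field_simps)
  then have "m * M / (n * M + m - n) = M / (t * M + (1 - t))"
    using assms by simp
  also have "\<dots> \<le> M / M powr t"
    using young pos pos' assms by (intro divide_left_mono mult_pos_pos) auto
  also have "\<dots> = M powr ((m - n) / m)"
    using assms by (simp add: t_def diff_divide_distrib powr_diff)
  finally show ?thesis .
qed

lemma qsc_output_ratio_le:
  fixes u v p0 p1 M :: real
  assumes "0 \<le> u" "0 \<le> v" "0 < max u v" "1 < M"
    and "0 \<le> p0" "p0 \<le> 1" "0 \<le> p1" "p1 \<le> 1"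
    and "p0 \<le> M * p1" "1 - p0 \<le> M * (1 - p1)"
  shows "(u + (v - u) * p0) / (u + (v - u) * p1) \<le> M powr (\<bar>v - u\<bar> / max u v)"
proof -
  define m n where "m = max u v" and "n = min u v"
  have mn: "0 \<le> n" "n \<le> m" "0 < m" "\<bar>v - u\<bar> / max u v = (m - n) / m"
    using assms(1-3) by (auto simp: m_def n_def)
  have "(u + (v - u) * p0) / (u + (v - u) * p1) \<le> m * M / (n * M + m - n)"
  proof (cases "u \<le> v")
    case True
    then have "m = v" "n = u" by (auto simp: m_def n_def)
    then show ?thesis using affine_ratio_le[OF mn(1-3) assms(4,6,7,9)] by simp
  next
    case False
    then have "u + (v - u) * p = n + (m - n) * (1 - p)" for p
      by (auto simp: m_def n_def algebra_simps)
    then show ?thesis using affine_ratio_le[of n m M "1 - p0" "1 - p1"] mn assms by simp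
  qed
  also have "\<dots> \<le> M powr (\<bar>v - u\<bar> / max u v)"
    unfolding mn(4) using mn(1-3) assms(4) by (rule affine_bound_le_powr)
  finally show ?thesis .
qed

lemma admissible_pairsD:
  assumes "(P0, P1) \<in> admissible_pairs"
  shows "P0 \<in> prob_simplex" "P1 \<in> prob_simplex" "P0 \<noteq> P1" "P1 x = 0 \<Longrightarrow> P0 x = 0"
  using assms by (auto simp: admissible_pairs_def)

lemma out_dist_qsc_in_prob_simplex:
  fixes P :: "'a::finite \<Rightarrow> real"
  assumes "P \<in> prob_simplex" "0 \<le> u" "0 \<le> v" "v = 1 - (real CARD('a) - 1) * u"
  shows "out_dist (qsc u v) P \<in> prob_simplex"
  using assms by (intro out_dist_in_prob_simplex) (simp_all add: qsc_nonneg sum_qsc)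

lemma max_ratio_out_dist_qsc_le:
  assumes "0 \<le> u" "0 \<le> v" "0 < max u v" and "(P0, P1) \<in> admissible_pairs"
  shows "max_ratio (out_dist (qsc u v) P0) (out_dist (qsc u v) P1)
    \<le> max_ratio P0 P1 powr (\<bar>v - u\<bar> / max u v)"
proof -
  note P = admissible_pairsD[OF assms(4)]
  define M where "M = max_ratio P0 P1"
  have "1 < M" unfolding M_def using P by (intro one_less_max_ratio)
  have dom: "P0 x \<le> M * P1 x" for x
    unfolding M_def using P by (intro le_max_ratio_mult prob_simplex_nonneg)
  have "out_dist (qsc u v) P0 y / out_dist (qsc u v) P1 y \<le> M powr (\<bar>v - u\<bar> / max u v)" for y
    unfolding out_dist_qsc[OF P(1)] out_dist_qsc[OF P(2)]
    using assms(1-3) \<open>1 < M\<close> P(1,2) dom one_minus_le_mult_one_minus[OF P(1,2) dom]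
    by (intro qsc_output_ratio_le) (auto intro: prob_simplex_nonneg prob_simplex_le_one)
  then show ?thesis
    unfolding M_def max_ratio_def[of "out_dist (qsc u v) P0"] by (intro Max.boundedI) auto
qed

lemma contraction_ratio_qsc_le:
  fixes P0 P1 :: "'a::finite \<Rightarrow> real"
  assumes "0 \<le> u" "0 \<le> v" "v = 1 - (real CARD('a) - 1) * u"
    and "(P0, P1) \<in> admissible_pairs"
  shows "contraction_ratio (qsc u v) P0 P1 \<le> \<bar>v - u\<bar> / max u v"
proof -
  note P = admissible_pairsD[OF assms(4)]
  define c where "c = \<bar>v - u\<bar> / max u v"
  define Q0 Q1 where "Q0 = out_dist (qsc u v) P0" and "Q1 = out_dist (qsc u v) P1"
  have "0 < max u v" using assms(1-3) by (cases "u = 0") auto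
  have Q: "Q0 \<in> prob_simplex" "Q1 \<in> prob_simplex"
    unfolding Q0_def Q1_def using P assms(1-3) by (simp_all add: out_dist_qsc_in_prob_simplex)
  have "Q0 y = 0" if "Q1 y = 0" for y
    using that out_dist_abs_cont[of P1 "qsc u v" P0 y] P(4) prob_simplex_nonneg[OF P(2)]
      qsc_nonneg[OF assms(1,2)]
    unfolding Q0_def Q1_def by blast
  then have "1 \<le> max_ratio Q0 Q1" using Q by (intro one_le_max_ratio)
  have "1 < max_ratio P0 P1" using P by (intro one_less_max_ratio)
  have "Dinf Q0 Q1 = ln (max_ratio Q0 Q1)" by (rule Dinf_eq_ln_max_ratio)
  also have "\<dots> \<le> ln (max_ratio P0 P1 powr c)"
    using \<open>1 \<le> max_ratio Q0 Q1\<close> max_ratio_out_dist_qsc_le[OF assms(1,2) \<open>0 < max u v\<close> assms(4)]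
    unfolding Q0_def Q1_def c_def by (intro ln_mono) auto
  also have "\<dots> = c * Dinf P0 P1"
    using \<open>1 < max_ratio P0 P1\<close> by (simp add: ln_powr Dinf_eq_ln_max_ratio)
  finally have "Dinf Q0 Q1 \<le> c * Dinf P0 P1" .
  moreover have "0 < Dinf P0 P1"
    using \<open>1 < max_ratio P0 P1\<close> by (simp add: Dinf_eq_ln_max_ratio)
  ultimately show ?thesis
    unfolding contraction_ratio_def c_def Q0_def Q1_def by (simp add: divide_le_eq)
qed

definition binary_dist :: "'a \<Rightarrow> 'a \<Rightarrow> real \<Rightarrow> 'a \<Rightarrow> real" where
  "binary_dist x0 x1 h x = (if x = x0 then 1 - h else 0) + (if x = x1 then h else 0)"

lemma binary_dist_zero: "binary_dist x0 x1 0 x = (if x = x0 then 1 else 0)"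
  by (simp add: binary_dist_def)

lemma tendsto_binary_dist:
  assumes "h \<longlonglongrightarrow> 0"
  shows "(\<lambda>n. binary_dist x0 x1 (h n) x) \<longlonglongrightarrow> binary_dist x0 x1 0 x"
  unfolding binary_dist_def using assms
  by (cases "x = x0"; cases "x = x1") (auto intro!: tendsto_eq_intros)

lemma binary_dist_in_prob_simplex:
  fixes x0 x1 :: "'a::finite"
  assumes "0 \<le> h" "h \<le> 1"
  shows "binary_dist x0 x1 h \<in> prob_simplex"
  using assms by (auto simp: prob_simplex_def binary_dist_def sum.distrib)

lemma admissible_binary_dist:
  fixes x0 x1 :: "'a::finite"
  assumes "x0 \<noteq> x1" "0 < h" "h < 1"
  shows "(binary_dist x0 x1 0, binary_dist x0 x1 h) \<in> admissible_pairs"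
proof -
  have "binary_dist x0 x1 0 x0 \<noteq> binary_dist x0 x1 h x0"
    using assms by (simp add: binary_dist_def)
  then have "binary_dist x0 x1 0 \<noteq> binary_dist x0 x1 h" by metis
  then show ?thesis
    using assms by (auto simp: admissible_pairs_def binary_dist_in_prob_simplex binary_dist_def)
qed

lemma Dinf_binary_dist:
  fixes x0 x1 :: "'a::finite"
  assumes "x0 \<noteq> x1" "0 < h" "h < 1"
  shows "Dinf (binary_dist x0 x1 0) (binary_dist x0 x1 h) = - ln (1 - h)"
proof -
  have "max_ratio (binary_dist x0 x1 0) (binary_dist x0 x1 h) = 1 / (1 - h)"
    unfolding max_ratio_def
  proof (rule Max_eqI)
    show "1 / (1 - h) \<in> range (\<lambda>x. binary_dist x0 x1 0 x / binary_dist x0 x1 h x)"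
      using assms by (intro range_eqI[of _ _ x0]) (simp add: binary_dist_def)
  qed (use assms in \<open>auto simp: binary_dist_def\<close>)
  then show ?thesis using assms by (simp add: Dinf_eq_ln_max_ratio ln_div)
qed

lemma ex_out_dist_qsc_binary_dist_ratio:
  fixes x0 x1 :: "'a::finite"
  assumes "x0 \<noteq> x1" "0 \<le> u" "0 \<le> v" "0 < max u v" "0 \<le> h" "h \<le> 1"
  shows "\<exists>y. out_dist (qsc u v) (binary_dist x0 x1 0) y / out_dist (qsc u v) (binary_dist x0 x1 h) y
    = 1 / (1 - \<bar>v - u\<bar> / max u v * h)"
proof (cases "u \<le> v")
  case True
  then show ?thesis using assms
    by (intro exI[of _ x0])
      (simp add: out_dist_qsc binary_dist_in_prob_simplex binary_dist_def field_simps)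
next
  case False
  then show ?thesis using assms
    by (intro exI[of _ x1])
      (simp add: out_dist_qsc binary_dist_in_prob_simplex binary_dist_def field_simps)
qed

lemma contraction_ratio_qsc_binary_dist_ge:
  fixes x0 x1 :: "'a::finite"
  assumes "x0 \<noteq> x1" "0 \<le> u" "0 \<le> v" "0 < max u v" "0 < h" "h < 1"
  shows "\<bar>v - u\<bar> / max u v * (1 - h)
    \<le> contraction_ratio (qsc u v) (binary_dist x0 x1 0) (binary_dist x0 x1 h)"
proof -
  define c where "c = \<bar>v - u\<bar> / max u v"
  define Q0 Q1 where "Q0 = out_dist (qsc u v) (binary_dist x0 x1 0)"
    and "Q1 = out_dist (qsc u v) (binary_dist x0 x1 h)"
  have c: "0 \<le> c" "c \<le> 1" using assms(2-4) by (auto simp: c_def)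
  have "c * h \<le> h" using c assms(5) by (intro mult_left_le_one_le) auto
  then have ch: "0 \<le> c * h" "c * h < 1" using c assms(5,6) by (simp, linarith)
  obtain y where y: "Q0 y / Q1 y = 1 / (1 - c * h)"
    using ex_out_dist_qsc_binary_dist_ratio[of x0 x1 u v h] assms unfolding Q0_def Q1_def c_def by auto
  have "c * h \<le> - ln (1 - c * h)"
    using ln_one_minus_pos_upper_bound[OF ch] by simp
  also have "\<dots> = ln (Q0 y / Q1 y)"
    using ch by (simp add: y ln_div)
  also have "\<dots> \<le> Dinf Q0 Q1"
    unfolding Dinf_eq_ln_max_ratio using ch y by (intro ln_mono ratio_le_max_ratio) auto
  finally have DQ: "c * h \<le> Dinf Q0 Q1" .
  have "- ln (1 - h) = ln (1 / (1 - h))"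
    using assms by (simp add: ln_div)
  also have "\<dots> \<le> h / (1 - h)"
    using assms ln_le_minus_one[of "1 / (1 - h)"] by (simp add: field_simps)
  finally have DP: "Dinf (binary_dist x0 x1 0) (binary_dist x0 x1 h) \<le> h / (1 - h)"
    using Dinf_binary_dist[OF assms(1,5,6)] by simp
  have DP_pos: "0 < Dinf (binary_dist x0 x1 0) (binary_dist x0 x1 h)"
    using Dinf_binary_dist[OF assms(1,5,6)] assms by simp
  have "c * (1 - h) = c * h / (h / (1 - h))"
    using assms by (simp add: field_simps)
  also have "\<dots> \<le> c * h / Dinf (binary_dist x0 x1 0) (binary_dist x0 x1 h)"
    using DP DP_pos ch assms(5,6) by (intro divide_left_mono) auto
  also have "\<dots> \<le> Dinf Q0 Q1 / Dinf (binary_dist x0 x1 0) (binary_dist x0 x1 h)"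
    using DQ DP_pos by (intro divide_right_mono) auto
  finally show ?thesis unfolding contraction_ratio_def Q0_def Q1_def c_def .
qed

lemma contraction_ratio_qsc_binary_dist_tendsto:
  fixes x0 x1 :: "'a::finite"
  assumes "x0 \<noteq> x1" "0 \<le> u" "0 \<le> v" "v = 1 - (real CARD('a) - 1) * u"
    and "\<And>n. 0 < h n" "\<And>n. h n < 1" "h \<longlonglongrightarrow> 0"
  shows "(\<lambda>n. contraction_ratio (qsc u v) (binary_dist x0 x1 0) (binary_dist x0 x1 (h n)))
    \<longlonglongrightarrow> \<bar>v - u\<bar> / max u v"
proof (rule tendsto_sandwich)
  have "0 < max u v" using assms(2-4) by (cases "u = 0") auto
  then show "\<forall>\<^sub>F n in sequentially. \<bar>v - u\<bar> / max u v * (1 - h n)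
      \<le> contraction_ratio (qsc u v) (binary_dist x0 x1 0) (binary_dist x0 x1 (h n))"
    using assms by (intro always_eventually allI contraction_ratio_qsc_binary_dist_ge) auto
  show "\<forall>\<^sub>F n in sequentially. contraction_ratio (qsc u v) (binary_dist x0 x1 0) (binary_dist x0 x1 (h n))
      \<le> \<bar>v - u\<bar> / max u v"
    using assms
    by (intro always_eventually allI contraction_ratio_qsc_le admissible_binary_dist) auto
  show "(\<lambda>n. \<bar>v - u\<bar> / max u v * (1 - h n)) \<longlonglongrightarrow> \<bar>v - u\<bar> / max u v"
    using tendsto_mult_left[OF tendsto_diff[OF tendsto_const assms(7)], of "\<bar>v - u\<bar> / max u v" 1]
    by simp
qed simp

lemma cSUP_eq_limit:
  fixes f :: "'a \<Rightarrow> 'b::{conditionally_complete_linorder,linorder_topology}"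
  assumes "\<And>a. a \<in> A \<Longrightarrow> f a \<le> c" and "\<And>n. s n \<in> A" and "(\<lambda>n. f (s n)) \<longlonglongrightarrow> c"
  shows "(SUP a\<in>A. f a) = c"
proof (rule antisym)
  have "A \<noteq> {}" using assms(2) by blast
  then show "(SUP a\<in>A. f a) \<le> c" by (rule cSUP_least) (rule assms(1))
  have "bdd_above (f ` A)" using assms(1) by (intro bdd_aboveI2)
  then have "f (s n) \<le> (SUP a\<in>A. f a)" for n by (intro cSUP_upper assms(2))
  then show "c \<le> (SUP a\<in>A. f a)" by (intro LIMSEQ_le_const2[OF assms(3)]) blast
qed

theorem theorem4p5:
  fixes u v :: real and W :: "'a::finite \<Rightarrow> 'a \<Rightarrow> real"
  assumes q: "CARD('a) \<ge> 2"
    and u: "0 \<le> u" "u \<le> 1" and v: "0 \<le> v" "v \<le> 1"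
    and uv: "v = 1 - (real CARD('a) - 1) * u"
    and W: "W = qsc u v"
  shows "eta_inf W = \<bar>v - u\<bar> / max u v
    \<and> (\<exists>x0 x1 :: 'a. x0 \<noteq> x1 \<and>
         (\<exists>P0 P1 :: nat \<Rightarrow> 'a \<Rightarrow> real.
            (\<forall>n. (P0 n, P1 n) \<in> admissible_pairs
                 \<and> (\<forall>x. x \<notin> {x0, x1} \<longrightarrow> P0 n x = 0 \<and> P1 n x = 0))
          \<and> (\<forall>x. (\<lambda>n. P0 n x) \<longlonglongrightarrow> (if x = x0 then 1 else 0))
          \<and> (\<forall>x. (\<lambda>n. P1 n x) \<longlonglongrightarrow> (if x = x0 then 1 else 0))
          \<and> (\<lambda>n. contraction_ratio W (P0 n) (P1 n)) \<longlonglongrightarrow> \<bar>v - u\<bar> / max u v))"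
proof -
  obtain x0 x1 :: 'a where "x0 \<noteq> x1"
    using q card_le_Suc0_iff_eq[of "UNIV :: 'a set"] by auto
  define h :: "nat \<Rightarrow> real" where "h n = 1 / (real n + 2)" for n
  have h: "0 < h n" "h n < 1" for n by (simp_all add: h_def)
  have "h \<longlonglongrightarrow> 0" unfolding h_def by real_asymp
  define P0 P1 :: "nat \<Rightarrow> 'a \<Rightarrow> real"
    where "P0 n = binary_dist x0 x1 0" and "P1 n = binary_dist x0 x1 (h n)" for n
  have adm: "(P0 n, P1 n) \<in> admissible_pairs" for n
    unfolding P0_def P1_def using \<open>x0 \<noteq> x1\<close> h by (rule admissible_binary_dist)
  have lim: "(\<lambda>n. contraction_ratio W (P0 n) (P1 n)) \<longlonglongrightarrow> \<bar>v - u\<bar> / max u v"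
    unfolding W P0_def P1_def using \<open>x0 \<noteq> x1\<close> u v uv h \<open>h \<longlonglongrightarrow> 0\<close>
    by (intro contraction_ratio_qsc_binary_dist_tendsto) auto
  have "eta_inf W = \<bar>v - u\<bar> / max u v"
    unfolding eta_inf_def
  proof (rule cSUP_eq_limit[where s = "\<lambda>n. (P0 n, P1 n)"])
    show "contraction_ratio W (fst PP) (snd PP) \<le> \<bar>v - u\<bar> / max u v"
      if "PP \<in> admissible_pairs" for PP
      using contraction_ratio_qsc_le[OF u(1) v(1) uv, of "fst PP" "snd PP"] that W by simp
  qed (use adm lim in auto)
  moreover have "(\<lambda>n. P1 n x) \<longlonglongrightarrow> (if x = x0 then 1 else 0)" for x
    using tendsto_binary_dist[OF \<open>h \<longlonglongrightarrow> 0\<close>, of x0 x1 x] by (simp only: P1_def binary_dist_zero)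
  moreover have "(\<lambda>n. P0 n x) \<longlonglongrightarrow> (if x = x0 then 1 else 0)" for x
    by (simp add: P0_def binary_dist_zero)
  moreover have "P0 n x = 0 \<and> P1 n x = 0" if "x \<notin> {x0, x1}" for n x
    using that by (simp add: P0_def P1_def binary_dist_def)
  ultimately show ?thesis
    using \<open>x0 \<noteq> x1\<close> adm lim by blast
qed

end
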